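(* Let $G$ be a nice graph of order $n$, size $m$ and maximum degree $\Delta$. Then ${\rm ME}^{\rm W}(G) \leq {\rm ML}^{\rm W}(G) \leq m \cdot {\rm ME}^{\rm W}(G)$, ${\rm MV}^{\rm W}(G) \leq {\rm ML}^{\rm W}(G) \leq \frac{n}{2}\cdot {\rm MV}^{\rm W}(G)$, and ${\rm ME}^{\rm W}(G) \leq {\rm MV}^{\rm W}(G) \leq \Delta \cdot {\rm ME}^{\rm W}(G)$.
   Context: All graphs are finite and simple. A walk of a graph $G$ is a sequence of vertices $u_0u_1\dots u_p$ with $u_tu_{t+1}\in E(G)$ for all $t$ (vertices and edges may repeat); its length is $p$. For a walk $W$ of $G$, $G+W$ is the multigraph on $V(G)$ whose edge multiset consists of $E(G)$ together with each edge $e$ added as many times as $W$ traverses $e$. A multigraph is locally irregular if no two adjacent vertices have the same degree; $W$ is irregularising if $G+W$ is locally irregular. A graph is nice if it is connected and not isomorphic to $K_2$. ${\rm ML}^{\rm W}(G)$ is the minimum length of an irregularising walk of $G$; ${\rm ME}^{\rm W}(G)$ is the minimum, over irregularising walks $W$ of $G$, of the maximum number of times $W$ traverses an edge; ${\rm MV}^{\rm W}(G)$ is the minimum, over irregularising walks $W$ of $G$, of the maximum over vertices $v$ of the number of edges of $W$ (counted with multiplicity) incident to $v$. *)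

theory Defs
  imports Complex_Main
begin

definition simple_graph :: "'a set \<Rightarrow> 'a set set \<Rightarrow> bool" where
  "simple_graph V E \<longleftrightarrow> finite V \<and> (\<forall>e\<in>E. e \<subseteq> V \<and> card e = 2)"

definition is_walk :: "'a set \<Rightarrow> 'a set set \<Rightarrow> 'a list \<Rightarrow> bool" where
  "is_walk V E ws \<longleftrightarrow> ws \<noteq> [] \<and> set ws \<subseteq> V \<and>
     (\<forall>i. Suc i < length ws \<longrightarrow> {ws ! i, ws ! Suc i} \<in> E)"

definition walk_len :: "'a list \<Rightarrow> nat" where
  "walk_len ws = length ws - 1"

definition edge_mult :: "'a list \<Rightarrow> 'a set \<Rightarrow> nat" where
  "edge_mult ws e = card {i. Suc i < length ws \<and> {ws ! i, ws ! Suc i} = e}"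

definition vert_load :: "'a list \<Rightarrow> 'a \<Rightarrow> nat" where
  "vert_load ws v = card {i. Suc i < length ws \<and> v \<in> {ws ! i, ws ! Suc i}}"

definition degree :: "'a set set \<Rightarrow> 'a \<Rightarrow> nat" where
  "degree E v = card {e\<in>E. v \<in> e}"

definition max_degree :: "'a set \<Rightarrow> 'a set set \<Rightarrow> nat" where
  "max_degree V E = Max (degree E ` V)"

text \<open>Degree of v in the multigraph G + W.\<close>
definition walk_degree :: "'a set set \<Rightarrow> 'a list \<Rightarrow> 'a \<Rightarrow> nat" where
  "walk_degree E ws v = degree E v + vert_load ws v"

definition irregularising :: "'a set \<Rightarrow> 'a set set \<Rightarrow> 'a list \<Rightarrow> bool" where
  "irregularising V E ws \<longleftrightarrow> is_walk V E ws \<and>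
     (\<forall>u v. {u, v} \<in> E \<longrightarrow> walk_degree E ws u \<noteq> walk_degree E ws v)"

definition connected_graph :: "'a set \<Rightarrow> 'a set set \<Rightarrow> bool" where
  "connected_graph V E \<longleftrightarrow> V \<noteq> {} \<and>
     (\<forall>u\<in>V. \<forall>v\<in>V. \<exists>ws. is_walk V E ws \<and> hd ws = u \<and> last ws = v)"

definition is_K2 :: "'a set \<Rightarrow> 'a set set \<Rightarrow> bool" where
  "is_K2 V E \<longleftrightarrow> card V = 2 \<and> E = {V}"

definition nice :: "'a set \<Rightarrow> 'a set set \<Rightarrow> bool" where
  "nice V E \<longleftrightarrow> simple_graph V E \<and> connected_graph V E \<and> \<not> is_K2 V E"

definition min_len_W :: "'a set \<Rightarrow> 'a set set \<Rightarrow> nat" where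
  "min_len_W V E = (LEAST k. \<exists>ws. irregularising V E ws \<and> walk_len ws = k)"

definition min_edge_W :: "'a set \<Rightarrow> 'a set set \<Rightarrow> nat" where
  "min_edge_W V E = (LEAST k. \<exists>ws. irregularising V E ws \<and>
      Max (insert 0 (edge_mult ws ` E)) = k)"

definition min_vert_W :: "'a set \<Rightarrow> 'a set set \<Rightarrow> nat" where
  "min_vert_W V E = (LEAST k. \<exists>ws. irregularising V E ws \<and>
      Max (insert 0 (vert_load ws ` V)) = k)"

end

theory Submission
  imports Defs
begin

(* Each inequality already holds for every single walk W: the length of W is the sum of its edge
   multiplicities and half the sum of its vertex loads, and the load of a vertex is the sum of the
   multiplicities of its incident edges.  Applying such a bound to a walk realising one minimum
   bounds the other minimum.  If there is no irregularising walk, the three minima coincide (as the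
   junk value LEAST k. False) and the inequalities hold because G has an edge: in an edgeless
   graph a one-vertex walk is irregularising. *)

definition max_edge_mult :: "'a set set \<Rightarrow> 'a list \<Rightarrow> nat" where
  "max_edge_mult E ws = Max (insert 0 (edge_mult ws ` E))"

definition max_vert_load :: "'a set \<Rightarrow> 'a list \<Rightarrow> nat" where
  "max_vert_load V ws = Max (insert 0 (vert_load ws ` V))"

lemma min_edge_W_eq:
  "min_edge_W V E = (LEAST k. \<exists>ws. irregularising V E ws \<and> max_edge_mult E ws = k)"
  unfolding min_edge_W_def max_edge_mult_def ..

lemma min_vert_W_eq:
  "min_vert_W V E = (LEAST k. \<exists>ws. irregularising V E ws \<and> max_vert_load V ws = k)"
  unfolding min_vert_W_def max_vert_load_def ..

lemma Least_cost_le: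
  fixes f g :: "'b \<Rightarrow> nat"
  assumes "\<exists>x. P x" and "mono h" and "\<And>x. P x \<Longrightarrow> g x \<le> h (f x)"
  shows "(LEAST k. \<exists>x. P x \<and> g x = k) \<le> h (LEAST k. \<exists>x. P x \<and> f x = k)"
proof -
  obtain x where x: "P x" "f x = (LEAST k. \<exists>x. P x \<and> f x = k)"
    using LeastI_ex[of "\<lambda>k. \<exists>x. P x \<and> f x = k"] assms(1) by blast
  have "(LEAST k. \<exists>x. P x \<and> g x = k) \<le> g x"
    by (rule Least_le) (use x in blast)
  also have "\<dots> \<le> h (f x)"
    using assms(3) x by blast
  finally show ?thesis
    using x by simp
qed

lemma walk_steps_eq: "{i. Suc i < length ws} = {..<walk_len ws}"
  unfolding walk_len_def by auto

lemma card_walk_steps [simp]: "card {i. Suc i < length ws} = walk_len ws"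
  by (simp add: walk_steps_eq)

lemma finite_walk_steps [simp]:
  "finite {i. Suc i < length ws}" "finite {i. Suc i < length ws \<and> P i}"
  by (simp_all add: walk_steps_eq)

lemma simple_graph_finite_edges: "simple_graph V E \<Longrightarrow> finite E"
  unfolding simple_graph_def by (metis Pow_iff finite_Pow_iff rev_finite_subset subsetI)

lemma walk_len_eq_sum_edge_mult:
  assumes "is_walk V E ws" and "finite E"
  shows "walk_len ws = (\<Sum>e\<in>E. edge_mult ws e)"
proof -
  have "(\<Sum>e\<in>E. \<Sum>i\<in>{i. i \<in> {i. Suc i < length ws} \<and> {ws ! i, ws ! Suc i} = e}. 1::nat)
      = (\<Sum>i\<in>{i. Suc i < length ws}. 1)"
    by (rule sum.group) (use assms in \<open>auto simp: is_walk_def\<close>)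
  then show ?thesis
    by (simp add: edge_mult_def)
qed

lemma vert_load_eq_sum_edge_mult:
  assumes "is_walk V E ws" and "finite E"
  shows "vert_load ws v = (\<Sum>e\<in>{e\<in>E. v \<in> e}. edge_mult ws e)"
proof -
  let ?S = "{i. Suc i < length ws \<and> v \<in> {ws ! i, ws ! Suc i}}"
  have "(\<Sum>e\<in>{e\<in>E. v \<in> e}. \<Sum>i\<in>{i. i \<in> ?S \<and> {ws ! i, ws ! Suc i} = e}. 1::nat)
      = (\<Sum>i\<in>?S. 1)"
    by (rule sum.group) (use assms in \<open>auto simp: is_walk_def\<close>)
  moreover have "{i. i \<in> ?S \<and> {ws ! i, ws ! Suc i} = e}
      = {i. Suc i < length ws \<and> {ws ! i, ws ! Suc i} = e}" if "v \<in> e" for e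
    using that by auto
  ultimately show ?thesis
    unfolding vert_load_def edge_mult_def by simp
qed

lemma sum_vert_load:
  assumes "simple_graph V E" and "is_walk V E ws"
  shows "(\<Sum>v\<in>V. vert_load ws v) = 2 * walk_len ws"
proof -
  have "card {v\<in>V. v \<in> {ws ! i, ws ! Suc i}} = 2" if "Suc i < length ws" for i
  proof -
    have "{ws ! i, ws ! Suc i} \<in> E"
      using assms(2) that by (simp add: is_walk_def)
    then have "{ws ! i, ws ! Suc i} \<subseteq> V" "card {ws ! i, ws ! Suc i} = 2"
      using assms(1) by (auto simp: simple_graph_def)
    moreover have "{v\<in>V. v \<in> {ws ! i, ws ! Suc i}} = {ws ! i, ws ! Suc i}"
      using calculation(1) by blast
    ultimately show ?thesis
      by simp
  qed
  then have "(\<Sum>v\<in>V. card {i\<in>{i. Suc i < length ws}. v \<in> {ws ! i, ws ! Suc i}})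
      = 2 * card {i. Suc i < length ws}"
    using assms(1) by (intro sum_multicount) (auto simp: simple_graph_def)
  then show ?thesis
    by (simp add: vert_load_def)
qed

lemma edge_mult_le_walk_len: "edge_mult ws e \<le> walk_len ws"
proof -
  have "edge_mult ws e \<le> card {i. Suc i < length ws}"
    unfolding edge_mult_def by (rule card_mono) auto
  then show ?thesis
    by simp
qed

lemma vert_load_le_walk_len: "vert_load ws v \<le> walk_len ws"
proof -
  have "vert_load ws v \<le> card {i. Suc i < length ws}"
    unfolding vert_load_def by (rule card_mono) auto
  then show ?thesis
    by simp
qed

lemma edge_mult_le_vert_load: "v \<in> e \<Longrightarrow> edge_mult ws e \<le> vert_load ws v"
  unfolding edge_mult_def vert_load_def by (rule card_mono) auto

lemma edge_mult_le_max: "finite E \<Longrightarrow> e \<in> E \<Longrightarrow> edge_mult ws e \<le> max_edge_mult E ws"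
  unfolding max_edge_mult_def by (rule Max_ge) auto

lemma vert_load_le_max: "finite V \<Longrightarrow> v \<in> V \<Longrightarrow> vert_load ws v \<le> max_vert_load V ws"
  unfolding max_vert_load_def by (rule Max_ge) auto

lemma max_edge_mult_le_walk_len: "finite E \<Longrightarrow> max_edge_mult E ws \<le> walk_len ws"
  unfolding max_edge_mult_def by (auto intro!: Max.boundedI simp: edge_mult_le_walk_len)

lemma max_vert_load_le_walk_len: "finite V \<Longrightarrow> max_vert_load V ws \<le> walk_len ws"
  unfolding max_vert_load_def by (auto intro!: Max.boundedI simp: vert_load_le_walk_len)

lemma walk_len_le_card_edges:
  assumes "is_walk V E ws" and "finite E"
  shows "walk_len ws \<le> card E * max_edge_mult E ws"
proof -
  have "walk_len ws = (\<Sum>e\<in>E. edge_mult ws e)"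
    using assms by (rule walk_len_eq_sum_edge_mult)
  also have "\<dots> \<le> (\<Sum>e\<in>E. max_edge_mult E ws)"
    by (rule sum_mono) (use assms(2) in \<open>rule edge_mult_le_max\<close>)
  finally show ?thesis
    by simp
qed

lemma walk_len_le_card_vertices:
  assumes "simple_graph V E" and "is_walk V E ws"
  shows "2 * walk_len ws \<le> card V * max_vert_load V ws"
proof -
  have "finite V"
    using assms(1) by (simp add: simple_graph_def)
  have "2 * walk_len ws = (\<Sum>v\<in>V. vert_load ws v)"
    using assms by (simp add: sum_vert_load)
  also have "\<dots> \<le> (\<Sum>v\<in>V. max_vert_load V ws)"
    by (rule sum_mono) (use \<open>finite V\<close> in \<open>rule vert_load_le_max\<close>)
  finally show ?thesis
    by simp
qed

lemma max_edge_mult_le_max_vert_load: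
  assumes "simple_graph V E"
  shows "max_edge_mult E ws \<le> max_vert_load V ws"
  unfolding max_edge_mult_def
proof (rule Max.boundedI)
  show "finite (insert 0 (edge_mult ws ` E))"
    using assms by (simp add: simple_graph_finite_edges)
  fix a assume "a \<in> insert 0 (edge_mult ws ` E)"
  then consider "a = 0" | e where "e \<in> E" "a = edge_mult ws e"
    by auto
  then show "a \<le> max_vert_load V ws"
  proof cases
    case 2
    have "e \<subseteq> V" "card e = 2" "finite V"
      using assms \<open>e \<in> E\<close> by (auto simp: simple_graph_def)
    then obtain v where "v \<in> e" "v \<in> V"
      by (metis card_2_iff insertI1 subsetD)
    then show ?thesis
      using 2 \<open>finite V\<close> le_trans edge_mult_le_vert_load vert_load_le_max by metis
  qed simp
qed simp

lemma max_vert_load_le_max_degree: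
  assumes "simple_graph V E" and "is_walk V E ws"
  shows "max_vert_load V ws \<le> max_degree V E * max_edge_mult E ws"
  unfolding max_vert_load_def
proof (rule Max.boundedI)
  have fin: "finite V" "finite E"
    using assms(1) simple_graph_finite_edges by (auto simp: simple_graph_def)
  then show "finite (insert 0 (vert_load ws ` V))"
    by simp
  fix a assume "a \<in> insert 0 (vert_load ws ` V)"
  then consider "a = 0" | v where "v \<in> V" "a = vert_load ws v"
    by auto
  then show "a \<le> max_degree V E * max_edge_mult E ws"
  proof cases
    case 2
    have "a = (\<Sum>e\<in>{e\<in>E. v \<in> e}. edge_mult ws e)"
      using 2 assms(2) fin by (simp add: vert_load_eq_sum_edge_mult)
    also have "\<dots> \<le> (\<Sum>e\<in>{e\<in>E. v \<in> e}. max_edge_mult E ws)"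
      by (rule sum_mono) (use fin in \<open>auto intro: edge_mult_le_max\<close>)
    also have "\<dots> = degree E v * max_edge_mult E ws"
      by (simp add: degree_def)
    also have "\<dots> \<le> max_degree V E * max_edge_mult E ws"
      unfolding max_degree_def using fin 2 by (intro mult_right_mono Max_ge) auto
    finally show ?thesis .
  qed simp
qed simp

context
  fixes V :: "'a set" and E :: "'a set set"
  assumes graph: "simple_graph V E" and irregularisable: "\<exists>ws. irregularising V E ws"
begin

private lemma walk: "irregularising V E ws \<Longrightarrow> is_walk V E ws"
  by (simp add: irregularising_def)

private lemma finite_graph: "finite V" "finite E"
  using graph simple_graph_finite_edges by (auto simp: simple_graph_def)

lemma min_edge_W_le_min_len_W: "min_edge_W V E \<le> min_len_W V E"
  unfolding min_edge_W_eq min_len_W_def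
  by (rule Least_cost_le[OF irregularisable, where h="\<lambda>k. k"])
    (simp_all add: mono_def max_edge_mult_le_walk_len finite_graph)

lemma min_len_W_le_card_edges: "min_len_W V E \<le> card E * min_edge_W V E"
  unfolding min_edge_W_eq min_len_W_def
  by (rule Least_cost_le[OF irregularisable, where h="\<lambda>k. card E * k"])
    (simp_all add: mono_def walk_len_le_card_edges[OF walk] finite_graph)

lemma min_vert_W_le_min_len_W: "min_vert_W V E \<le> min_len_W V E"
  unfolding min_vert_W_eq min_len_W_def
  by (rule Least_cost_le[OF irregularisable, where h="\<lambda>k. k"])
    (simp_all add: mono_def max_vert_load_le_walk_len finite_graph)

lemma min_len_W_le_half_card_vertices:
  "real (min_len_W V E) \<le> real (card V) / 2 * real (min_vert_W V E)"
proof -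
  have "walk_len ws \<le> card V * max_vert_load V ws div 2" if "irregularising V E ws" for ws
    using walk_len_le_card_vertices[OF graph walk[OF that]] by linarith
  then have "min_len_W V E \<le> card V * min_vert_W V E div 2"
    unfolding min_vert_W_eq min_len_W_def
    by (intro Least_cost_le[OF irregularisable, where h="\<lambda>k. card V * k div 2"])
      (simp_all add: mono_def div_le_mono)
  then have "2 * min_len_W V E \<le> card V * min_vert_W V E"
    by linarith
  then have "real (2 * min_len_W V E) \<le> real (card V * min_vert_W V E)"
    by (simp only: of_nat_le_iff)
  then show ?thesis
    by simp
qed

lemma min_edge_W_le_min_vert_W: "min_edge_W V E \<le> min_vert_W V E"
  unfolding min_edge_W_eq min_vert_W_eq
  by (rule Least_cost_le[OF irregularisable, where h="\<lambda>k. k"])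
    (simp_all add: mono_def max_edge_mult_le_max_vert_load graph)

lemma min_vert_W_le_max_degree: "min_vert_W V E \<le> max_degree V E * min_edge_W V E"
  unfolding min_edge_W_eq min_vert_W_eq
  by (rule Least_cost_le[OF irregularisable, where h="\<lambda>k. max_degree V E * k"])
    (simp_all add: mono_def max_vert_load_le_max_degree[OF graph walk])

end

lemma irregularising_walk_if_edgeless:
  assumes "v \<in> V"
  shows "irregularising V {} [v]"
  using assms by (simp add: irregularising_def is_walk_def)

lemma minima_eq_if_not_irregularisable:
  assumes "\<not> (\<exists>ws. irregularising V E ws)"
  shows "min_edge_W V E = min_len_W V E" "min_vert_W V E = min_len_W V E"
  using assms by (simp_all add: min_len_W_def min_edge_W_def min_vert_W_def)

lemma simple_graph_edge_bounds:
  assumes "simple_graph V E" and "e \<in> E"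
  shows "1 \<le> card E" "2 \<le> card V" "1 \<le> max_degree V E"
proof -
  have fin: "finite V" "finite E" and e: "e \<subseteq> V" "card e = 2"
    using assms simple_graph_finite_edges by (auto simp: simple_graph_def)
  then show "1 \<le> card E" "2 \<le> card V"
    using assms(2) card_mono[of V e] by (auto simp: Suc_le_eq card_gt_0_iff)
  obtain v where v: "v \<in> e"
    using e by (metis card_2_iff insertI1)
  have "1 \<le> degree E v"
    unfolding degree_def using fin assms(2) v by (auto simp: Suc_le_eq card_gt_0_iff)
  also have "\<dots> \<le> max_degree V E"
    unfolding max_degree_def using fin v e by (intro Max_ge) auto
  finally show "1 \<le> max_degree V E" .
qed

theorem mainTheorem1:
  fixes V :: "'a set" and E :: "'a set set"
  assumes "nice V E"
  shows "min_edge_W V E \<le> min_len_W V E \<and> min_len_W V E \<le> card E * min_edge_W V E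
    \<and> min_vert_W V E \<le> min_len_W V E
    \<and> real (min_len_W V E) \<le> real (card V) / 2 * real (min_vert_W V E)
    \<and> min_edge_W V E \<le> min_vert_W V E \<and> min_vert_W V E \<le> max_degree V E * min_edge_W V E"
proof -
  have graph: "simple_graph V E" and "V \<noteq> {}"
    using assms by (auto simp: nice_def connected_graph_def)
  show ?thesis
  proof (cases "\<exists>ws. irregularising V E ws")
    case True
    show ?thesis
      using min_edge_W_le_min_len_W[OF graph True] min_len_W_le_card_edges[OF graph True]
        min_vert_W_le_min_len_W[OF graph True] min_len_W_le_half_card_vertices[OF graph True]
        min_edge_W_le_min_vert_W[OF graph True] min_vert_W_le_max_degree[OF graph True]
      by (intro conjI)
  next
    case False
    obtain v where "v \<in> V"
      using \<open>V \<noteq> {}\<close> by blast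
    then obtain e where "e \<in> E"
      using False irregularising_walk_if_edgeless by (metis equals0I)
    note bounds = simple_graph_edge_bounds[OF graph this]
    have "real (min_len_W V E) \<le> real (card V) / 2 * real (min_len_W V E)"
      using mult_right_mono[of 1 "real (card V) / 2"] bounds(2) by simp
    then show ?thesis
      using bounds by (simp add: minima_eq_if_not_irregularisable[OF False])
  qed
qed

end
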